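(* Let $q \geq 1$ and let $k$ be a positive integer with $k < n$. Let $\boldsymbol{B}$ be a dictionary as described in the context, and assume that every signal $\boldsymbol{y}\in\mathbb{R}^D$ that admits a $k$-block-sparse representation admits a unique one. If $$(2k-1)\,\mu_S < \frac{1-\epsilon'_q}{1+\epsilon'_q},$$ then for every $\Lambda_k\subseteq\{1,\dots,n\}$ with $|\Lambda_k|=k$ and every $\boldsymbol{y}\in\bigoplus_{i\in\Lambda_k}\mathcal{S}_i$, every optimal solution $\boldsymbol{c}^*$ of $P'_{\ell_q/\ell_1}(\boldsymbol{y})$ satisfies $\boldsymbol{B}[i]\boldsymbol{c}^*[i]=\boldsymbol{0}$ for all $i\notin\Lambda_k$; i.e. the solution of $P'_{\ell_q/\ell_1}$ is equivalent to that of $P'_{\ell_q/\ell_0}$.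
   Context: $\boldsymbol{B} = [\boldsymbol{B}[1]\ \cdots\ \boldsymbol{B}[n]] \in \mathbb{R}^{D\times N}$ has unit-Euclidean-norm columns, blocks $\boldsymbol{B}[i] \in \mathbb{R}^{D\times m_i}$ (possibly with linearly dependent columns); $\mathcal{S}_i = \operatorname{span}(\boldsymbol{B}[i])$, and $\mathcal{S}_i\cap\mathcal{S}_j = \{0\}$ for $i\ne j$. Vectors $\boldsymbol{c}\in\mathbb{R}^N$ are written $(\boldsymbol{c}[1];\dots;\boldsymbol{c}[n])$, $\boldsymbol{c}[i]\in\mathbb{R}^{m_i}$. A $k$-block-sparse representation of $\boldsymbol{y}$ is $\boldsymbol{y}=\sum_{i\in\Lambda}\boldsymbol{s}_i$ with $|\Lambda|\le k$, $\boldsymbol{s}_i\in\mathcal{S}_i\setminus\{0\}$; uniqueness means any two have the same $\Lambda$ and the same $\boldsymbol{s}_i$. $P'_{\ell_q/\ell_1}(\boldsymbol{y})$: $\min\sum_i\|\boldsymbol{B}[i]\boldsymbol{c}[i]\|_q$ s.t. $\boldsymbol{y}=\boldsymbol{B}\boldsymbol{c}$; $P'_{\ell_q/\ell_0}(\boldsymbol{y})$: minimize $\#\{i:\boldsymbol{B}[i]\boldsymbol{c}[i]\ne 0\}$ s.t. $\boldsymbol{y}=\boldsymbol{B}\boldsymbol{c}$. Subspace coherence: $\mu(\mathcal{S}_i,\mathcal{S}_j)=\max_{0\ne\boldsymbol{x}\in\mathcal{S}_i,\,0\ne\boldsymbol{z}\in\mathcal{S}_j}\frac{|\boldsymbol{x}^\top\boldsymbol{z}|}{\|\boldsymbol{x}\|_2\|\boldsymbol{z}\|_2}$;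 $\mu_S=\max_{i\ne j}\mu(\mathcal{S}_i,\mathcal{S}_j)$. $\epsilon'_q$: the smallest constant such that $(1-\epsilon'_q)\|\boldsymbol{B}[i]\boldsymbol{c}[i]\|_q^2\le\|\boldsymbol{B}[i]\boldsymbol{c}[i]\|_2^2\le(1+\epsilon'_q)\|\boldsymbol{B}[i]\boldsymbol{c}[i]\|_q^2$ for all $i$ and all $\boldsymbol{c}[i]$. *)

theory Defs
  imports "HOL-Analysis.Analysis"
begin

text \<open>Block dictionary: blocks are indexed by i < n; block i has columns
  B i j :: real^'d for j < m i.  Coefficient vectors c are given blockwise,
  c i j being the j-th entry of c[i].\<close>

definition blk :: "(nat \<Rightarrow> nat \<Rightarrow> real^'d) \<Rightarrow> (nat \<Rightarrow> nat) \<Rightarrow> (nat \<Rightarrow> nat \<Rightarrow> real) \<Rightarrow> nat \<Rightarrow> real^'d" where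
  "blk B m c i = (\<Sum>j<m i. c i j *\<^sub>R B i j)"

definition dict_mult :: "nat \<Rightarrow> (nat \<Rightarrow> nat \<Rightarrow> real^'d) \<Rightarrow> (nat \<Rightarrow> nat) \<Rightarrow> (nat \<Rightarrow> nat \<Rightarrow> real) \<Rightarrow> real^'d" where
  "dict_mult n B m c = (\<Sum>i<n. blk B m c i)"

definition subsp :: "(nat \<Rightarrow> nat \<Rightarrow> real^'d) \<Rightarrow> (nat \<Rightarrow> nat) \<Rightarrow> nat \<Rightarrow> (real^'d) set" where
  "subsp B m i = span (B i ` {..<m i})"

definition lq_norm :: "real \<Rightarrow> real^'d \<Rightarrow> real" where
  "lq_norm q x = (\<Sum>j\<in>UNIV. \<bar>x $ j\<bar> powr q) powr (1 / q)"

definition subspace_coherence :: "(real^'d) set \<Rightarrow> (real^'d) set \<Rightarrow> real" where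
  "subspace_coherence S T =
     Sup {\<bar>x \<bullet> z\<bar> / (norm x * norm z) | x z. x \<in> S - {0} \<and> z \<in> T - {0}}"

definition mu_S :: "nat \<Rightarrow> (nat \<Rightarrow> nat \<Rightarrow> real^'d) \<Rightarrow> (nat \<Rightarrow> nat) \<Rightarrow> real" where
  "mu_S n B m = Sup {subspace_coherence (subsp B m i) (subsp B m j) | i j. i < n \<and> j < n \<and> i \<noteq> j}"

definition eps_q :: "real \<Rightarrow> nat \<Rightarrow> (nat \<Rightarrow> nat \<Rightarrow> real^'d) \<Rightarrow> (nat \<Rightarrow> nat) \<Rightarrow> real" where
  "eps_q q n B m = Inf {e. \<forall>i<n. \<forall>c. 
       (1 - e) * (lq_norm q (blk B m c i))\<^sup>2 \<le> (norm (blk B m c i))\<^sup>2 \<and>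
       (norm (blk B m c i))\<^sup>2 \<le> (1 + e) * (lq_norm q (blk B m c i))\<^sup>2}"

definition block_sparse_rep :: "nat \<Rightarrow> (nat \<Rightarrow> nat \<Rightarrow> real^'d) \<Rightarrow> (nat \<Rightarrow> nat) \<Rightarrow> nat \<Rightarrow> real^'d \<Rightarrow> nat set \<Rightarrow> (nat \<Rightarrow> real^'d) \<Rightarrow> bool" where
  "block_sparse_rep n B m k y Lam s \<longleftrightarrow>
     Lam \<subseteq> {..<n} \<and> card Lam \<le> k \<and> (\<forall>i\<in>Lam. s i \<in> subsp B m i - {0}) \<and> y = (\<Sum>i\<in>Lam. s i)"

definition unique_block_sparse :: "nat \<Rightarrow> (nat \<Rightarrow> nat \<Rightarrow> real^'d) \<Rightarrow> (nat \<Rightarrow> nat) \<Rightarrow> nat \<Rightarrow> bool" where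
  "unique_block_sparse n B m k \<longleftrightarrow>
     (\<forall>y Lam s Lam' s'. block_sparse_rep n B m k y Lam s \<longrightarrow> block_sparse_rep n B m k y Lam' s' \<longrightarrow>
        Lam = Lam' \<and> (\<forall>i\<in>Lam. s i = s' i))"

definition lq_l1_obj :: "real \<Rightarrow> nat \<Rightarrow> (nat \<Rightarrow> nat \<Rightarrow> real^'d) \<Rightarrow> (nat \<Rightarrow> nat) \<Rightarrow> (nat \<Rightarrow> nat \<Rightarrow> real) \<Rightarrow> real" where
  "lq_l1_obj q n B m c = (\<Sum>i<n. lq_norm q (blk B m c i))"

definition opt_lq_l1 :: "real \<Rightarrow> nat \<Rightarrow> (nat \<Rightarrow> nat \<Rightarrow> real^'d) \<Rightarrow> (nat \<Rightarrow> nat) \<Rightarrow> real^'d \<Rightarrow> (nat \<Rightarrow> nat \<Rightarrow> real) \<Rightarrow> bool" where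
  "opt_lq_l1 q n B m y c \<longleftrightarrow> y = dict_mult n B m c \<and>
     (\<forall>c'. y = dict_mult n B m c' \<longrightarrow> lq_l1_obj q n B m c \<le> lq_l1_obj q n B m c')"

end

theory Submission
  imports Defs
begin

text \<open>Let \<open>c\<close> be optimal and \<open>y = (\<Sum>i\<in>Lam. s i)\<close>. The blockwise residual
  \<open>u i = B[i]c[i] - s i\<close> (with \<open>s i = 0\<close> off \<open>Lam\<close>) lies in the null space of the dictionary, and
  optimality plus the triangle inequality for the \<open>l_q\<close> norm show that the \<open>l_q\<close>-mass of \<open>u\<close>
  off \<open>Lam\<close> is at most its mass on \<open>Lam\<close>. On the other hand, since the blocks of \<open>u\<close> sum to zero,
  each \<open>norm (u j)\<close> is controlled by \<open>mu_S\<close> times the norms of the other blocks; converting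
  between \<open>l_2\<close> and \<open>l_q\<close> costs the factors \<open>sqrt (1 \<plusminus> eps_q)\<close>, and the coherence condition
  makes the resulting inequality a strict contraction, forcing \<open>u = 0\<close>.\<close>

lemma lq_norm_nonneg: "0 \<le> lq_norm q x"
  by (simp add: lq_norm_def)

lemma lq_norm_zero [simp]: "0 < q \<Longrightarrow> lq_norm q 0 = 0"
  by (simp add: lq_norm_def)

lemma lq_norm_minus_commute: "lq_norm q (a - b) = lq_norm q (b - a)"
  by (simp add: lq_norm_def abs_minus_commute)

lemma lq_norm_powr: "0 < q \<Longrightarrow> lq_norm q x powr q = (\<Sum>j\<in>UNIV. \<bar>x $ j\<bar> powr q)"
  by (simp add: lq_norm_def powr_powr sum_nonneg)

lemma abs_component_le_lq_norm:
  assumes "0 < q" shows "\<bar>x $ j\<bar> \<le> lq_norm q x"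
proof -
  have "\<bar>x $ j\<bar> = (\<bar>x $ j\<bar> powr q) powr (1/q)"
    using assms by (simp add: powr_powr)
  also have "\<dots> \<le> lq_norm q x"
    unfolding lq_norm_def using assms by (intro powr_mono2 member_le_sum) auto
  finally show ?thesis .
qed

lemma lq_norm_eq_0_iff: "0 < q \<Longrightarrow> lq_norm q x = 0 \<longleftrightarrow> x = 0"
  by (metis abs_component_le_lq_norm abs_le_zero_iff lq_norm_zero vec_eq_iff zero_index)

lemma norm_le_card_mult_lq_norm:
  assumes "0 < q" shows "norm (x::real^'d) \<le> real CARD('d) * lq_norm q x"
proof -
  have "norm x \<le> (\<Sum>j\<in>UNIV. \<bar>x $ j\<bar>)" by (rule norm_le_l1_cart)
  also have "\<dots> \<le> (\<Sum>j\<in>(UNIV::'d set). lq_norm q x)"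
    by (intro sum_mono abs_component_le_lq_norm assms)
  finally show ?thesis by simp
qed

lemma convex_on_powr_nonneg:
  assumes "1 \<le> q" shows "convex_on {0..} (\<lambda>x::real. x powr q)"
proof (rule convex_onI)
  fix t x y :: real assume t: "0 < t" "t < 1" and xy: "x \<in> {0..}" "y \<in> {0..}"
  have shrink: "s powr q \<le> s" if "0 \<le> s" "s \<le> 1" for s :: real
    using that assms by (metis powr_mono' powr_one)
  consider "x = 0" | "y = 0" | "x \<in> {0<..}" "y \<in> {0<..}" using xy by fastforce
  then show "((1 - t) *\<^sub>R x + t *\<^sub>R y) powr q \<le> (1 - t) * x powr q + t * y powr q"
  proof cases
    case 1
    then show ?thesis using t xy shrink[of t] by (simp add: powr_mult mult_right_mono)
  next
    case 2
    then show ?thesis using t xy shrink[of "1 - t"] by (simp add: powr_mult mult_right_mono)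
  next
    case 3
    then show ?thesis using convex_onD[OF powr_convex[OF assms], of t x y] t by simp
  qed
qed (rule convex_real_interval)

lemma sum_powr_scaled_lq_norm:
  assumes "0 < q" "0 < L" shows "(\<Sum>j\<in>UNIV. (\<bar>x $ j\<bar> / L) powr q) = lq_norm q x powr q / L powr q"
  using assms by (simp add: powr_divide sum_divide_distrib lq_norm_powr)

lemma lq_norm_triangle:
  assumes q: "1 \<le> q" shows "lq_norm q (a + b) \<le> lq_norm q a + lq_norm q b"
proof -
  define A B where "A = lq_norm q a" and "B = lq_norm q b"
  have q0: "0 < q" using q by simp
  show ?thesis
  proof (cases "A = 0 \<or> B = 0")
    case True
    then show ?thesis using lq_norm_eq_0_iff[OF q0, of a] lq_norm_eq_0_iff[OF q0, of b]
      unfolding A_def B_def by auto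
  next
    case False
    then have AB: "0 < A" "0 < B" using lq_norm_nonneg unfolding A_def B_def by (auto simp: less_le)
    define t where "t = B / (A + B)"
    have t: "0 \<le> t" "t \<le> 1" "1 - t = A / (A + B)" using AB unfolding t_def by (auto simp: field_simps)
    \<comment> \<open>Jensen for \<open>x powr q\<close> at the weights \<open>A/(A+B)\<close>, \<open>B/(A+B)\<close> of the normalised vectors \<open>a/A\<close>, \<open>b/B\<close>\<close>
    have pointwise: "(\<bar>(a + b) $ j\<bar> / (A + B)) powr q
        \<le> (1 - t) * (\<bar>a $ j\<bar> / A) powr q + t * (\<bar>b $ j\<bar> / B) powr q" for j
    proof -
      have "(1 - t) * (\<bar>a $ j\<bar> / A) + t * (\<bar>b $ j\<bar> / B) = (\<bar>a $ j\<bar> + \<bar>b $ j\<bar>) / (A + B)"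
        using AB unfolding t(3) by (simp add: t_def add_divide_distrib)
      then have "\<bar>(a + b) $ j\<bar> / (A + B) \<le> (1 - t) * (\<bar>a $ j\<bar> / A) + t * (\<bar>b $ j\<bar> / B)"
        using AB abs_triangle_ineq[of "a $ j" "b $ j"] by (simp add: divide_right_mono)
      then have "(\<bar>(a + b) $ j\<bar> / (A + B)) powr q \<le> ((1 - t) * (\<bar>a $ j\<bar> / A) + t * (\<bar>b $ j\<bar> / B)) powr q"
        using q0 AB by (intro powr_mono2) auto
      also have "\<dots> \<le> (1 - t) * (\<bar>a $ j\<bar> / A) powr q + t * (\<bar>b $ j\<bar> / B) powr q"
        using convex_onD[OF convex_on_powr_nonneg[OF q], of t "\<bar>a $ j\<bar> / A" "\<bar>b $ j\<bar> / B"] t AB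
        by simp
      finally show ?thesis .
    qed
    have "lq_norm q (a + b) powr q / (A + B) powr q = (\<Sum>j\<in>UNIV. (\<bar>(a + b) $ j\<bar> / (A + B)) powr q)"
      using sum_powr_scaled_lq_norm[OF q0, of "A + B" "a + b"] AB by simp
    also have "\<dots> \<le> (\<Sum>j\<in>UNIV. (1 - t) * (\<bar>a $ j\<bar> / A) powr q + t * (\<bar>b $ j\<bar> / B) powr q)"
      by (intro sum_mono pointwise)
    also have "\<dots> = 1"
      using AB q0 by (simp add: sum.distrib flip: sum_distrib_left) (simp add: sum_powr_scaled_lq_norm A_def B_def)
    finally have "lq_norm q (a + b) powr q \<le> (A + B) powr q"
      using AB by (simp add: divide_le_eq)
    then show ?thesis
      using powr_less_mono2[OF q0, of "A + B" "lq_norm q (a + b)"] AB unfolding A_def B_def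
      by (meson add_pos_pos less_le not_le order.trans)
  qed
qed

lemma sum_if_mem_subset:
  assumes "finite I" "A \<subseteq> I" shows "(\<Sum>i\<in>I. if i \<in> A then f i else 0) = sum f A"
  using sum.inter_restrict[OF assms(1), of f A] assms(2) by (simp add: Int_absorb1)

lemma subsp_eq_range_blk: "subsp B m i = range (\<lambda>c. blk B m c i)"
proof (intro antisym subsetI)
  fix v assume "v \<in> subsp B m i"
  \<comment> \<open>Columns may repeat, so pass to a set of indices on which \<open>B i\<close> is injective.\<close>
  obtain T where T: "T \<subseteq> {..<m i}" "B i ` {..<m i} = B i ` T" "inj_on (B i) T"
    using countable_image_eq_inj[of "B i" "{..<m i}"] by auto
  have "finite T" using T(1) finite_subset by blast
  moreover have "v \<in> span (B i ` T)" using \<open>v \<in> subsp B m i\<close> unfolding subsp_def T(2) .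
  ultimately obtain u where "v = (\<Sum>w\<in>B i ` T. u w *\<^sub>R w)"
    using span_finite[of "B i ` T"] by auto
  also have "\<dots> = (\<Sum>j\<in>T. u (B i j) *\<^sub>R B i j)"
    using T(3) by (simp add: sum.reindex)
  also have "\<dots> = blk B m (\<lambda>_ j. if j \<in> T then u (B i j) else 0) i"
    unfolding blk_def using T(1) by (simp add: if_distrib[of "\<lambda>r. r *\<^sub>R _"] sum.If_cases Int_absorb1)
  finally show "v \<in> range (\<lambda>c. blk B m c i)" by blast
next
  fix v assume "v \<in> range (\<lambda>c. blk B m c i)"
  then obtain c where "v = blk B m c i" by blast
  then show "v \<in> subsp B m i"
    unfolding blk_def subsp_def by (auto intro!: span_sum span_scale intro: span_base)
qed

lemma abs_inner_le_subspace_coherence: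
  assumes "x \<in> S" "z \<in> T"
  shows "\<bar>x \<bullet> z\<bar> \<le> subspace_coherence S T * (norm x * norm z)"
proof (cases "x = 0 \<or> z = 0")
  case False
  let ?C = "{\<bar>x \<bullet> z\<bar> / (norm x * norm z) | x z. x \<in> S - {0} \<and> z \<in> T - {0}}"
  have "bdd_above ?C"
    by (rule bdd_aboveI[of _ 1]) (auto simp: divide_le_eq Cauchy_Schwarz_ineq2)
  moreover have "\<bar>x \<bullet> z\<bar> / (norm x * norm z) \<in> ?C" using assms False by blast
  ultimately have "\<bar>x \<bullet> z\<bar> / (norm x * norm z) \<le> subspace_coherence S T"
    unfolding subspace_coherence_def by (rule cSup_upper[rotated])
  then show ?thesis using False by (simp add: divide_le_eq)
qed auto

lemma subspace_coherence_le_mu_S: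
  assumes "i < n" "j < n" "i \<noteq> j"
  shows "subspace_coherence (subsp B m i) (subsp B m j) \<le> mu_S n B m"
proof -
  let ?M = "{subspace_coherence (subsp B m i) (subsp B m j) | i j. i < n \<and> j < n \<and> i \<noteq> j}"
  have "?M \<subseteq> (\<lambda>(i, j). subspace_coherence (subsp B m i) (subsp B m j)) ` ({..<n} \<times> {..<n})"
    by auto
  then have "finite ?M" by (rule finite_subset) auto
  then show ?thesis
    unfolding mu_S_def using assms by (intro cSup_upper bdd_above_finite) blast+
qed

lemma abs_inner_le_mu_S:
  assumes "i < n" "j < n" "i \<noteq> j" "x \<in> subsp B m i" "z \<in> subsp B m j"
  shows "\<bar>x \<bullet> z\<bar> \<le> mu_S n B m * (norm x * norm z)"
proof -
  have "\<bar>x \<bullet> z\<bar> \<le> subspace_coherence (subsp B m i) (subsp B m j) * (norm x * norm z)"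
    using assms(4,5) by (rule abs_inner_le_subspace_coherence)
  also have "\<dots> \<le> mu_S n B m * (norm x * norm z)"
    using subspace_coherence_le_mu_S[OF assms(1-3)] by (intro mult_right_mono) auto
  finally show ?thesis .
qed

lemma mu_S_nonneg:
  assumes "i < n" "j < n" "i \<noteq> j" "x \<in> subsp B m i" "z \<in> subsp B m j" "x \<noteq> 0" "z \<noteq> 0"
  shows "0 \<le> mu_S n B m"
proof -
  have "0 \<le> mu_S n B m * (norm x * norm z)"
    using abs_inner_le_mu_S[OF assms(1-5)] by (rule order.trans[OF abs_ge_zero])
  moreover have "0 < norm x * norm z" using assms(6,7) by simp
  ultimately show ?thesis by (simp add: zero_le_mult_iff)
qed

lemma eps_q_bounds:
  fixes B :: "nat \<Rightarrow> nat \<Rightarrow> real^'d"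
  assumes q: "0 < q" and i: "i < n" and v: "v \<in> subsp B m i"
  shows "(1 - eps_q q n B m) * (lq_norm q v)\<^sup>2 \<le> (norm v)\<^sup>2 \<and>
    (norm v)\<^sup>2 \<le> (1 + eps_q q n B m) * (lq_norm q v)\<^sup>2"
proof (cases "v = 0")
  case False
  define E where "E = {e. \<forall>i<n. \<forall>c.
       (1 - e) * (lq_norm q (blk B m c i))\<^sup>2 \<le> (norm (blk B m c i))\<^sup>2 \<and>
       (norm (blk B m c i))\<^sup>2 \<le> (1 + e) * (lq_norm q (blk B m c i))\<^sup>2}"
  have "(real CARD('d))\<^sup>2 \<in> E"
    unfolding E_def
  proof (intro CollectI allI impI conjI)
    fix i c
    let ?w = "blk B m c i"
    have "(norm ?w)\<^sup>2 \<le> (real CARD('d))\<^sup>2 * (lq_norm q ?w)\<^sup>2"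
      using power_mono[OF norm_le_card_mult_lq_norm[OF q, of ?w], of 2] by (simp add: power_mult_distrib)
    then show "(norm ?w)\<^sup>2 \<le> (1 + (real CARD('d))\<^sup>2) * (lq_norm q ?w)\<^sup>2"
      by (simp add: distrib_right add_increasing)
    have "(1 - (real CARD('d))\<^sup>2) * (lq_norm q ?w)\<^sup>2 \<le> 0"
      by (intro mult_nonpos_nonneg) (auto simp: Suc_le_eq)
    then show "(1 - (real CARD('d))\<^sup>2) * (lq_norm q ?w)\<^sup>2 \<le> (norm ?w)\<^sup>2"
      using zero_le_power2 order.trans by blast
  qed
  then have "E \<noteq> {}" by blast
  obtain c where c: "v = blk B m c i" using v by (auto simp: subsp_eq_range_blk)
  define r where "r = (norm v)\<^sup>2 / (lq_norm q v)\<^sup>2"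
  have L: "0 < (lq_norm q v)\<^sup>2"
    using False lq_norm_eq_0_iff[OF q, of v] by simp
  have "r - 1 \<le> e \<and> 1 - r \<le> e" if "e \<in> E" for e
    using that i L unfolding E_def c r_def by (auto simp: field_simps)
  then have "r - 1 \<le> Inf E \<and> 1 - r \<le> Inf E"
    using \<open>E \<noteq> {}\<close> by (auto intro: cInf_greatest)
  then show ?thesis
    using L unfolding r_def eps_q_def E_def[symmetric] by (auto simp: field_simps)
qed (simp add: q)

lemma eps_q_nonneg:
  assumes "0 < q" "i < n" "v \<in> subsp B m i" "v \<noteq> 0"
  shows "0 \<le> eps_q q n B m"
proof -
  have "0 < (lq_norm q v)\<^sup>2" using assms(1,4) lq_norm_eq_0_iff[OF assms(1), of v] by simp
  with eps_q_bounds[OF assms(1-3)] show ?thesis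
    by (smt (verit) mult_le_cancel_right)
qed

lemma lq_norm_equiv_eps_q:
  fixes B :: "nat \<Rightarrow> nat \<Rightarrow> real^'d"
  assumes "0 < q" "i < n" "v \<in> subsp B m i"
  shows "sqrt (1 - eps_q q n B m) * lq_norm q v \<le> norm v \<and> norm v \<le> sqrt (1 + eps_q q n B m) * lq_norm q v"
proof -
  have sqrt_scaled: "sqrt (a * (lq_norm q v)\<^sup>2) = sqrt a * lq_norm q v" for a
    by (simp add: real_sqrt_mult lq_norm_nonneg)
  show ?thesis
    using eps_q_bounds[OF assms] real_sqrt_le_mono[of "_ * (lq_norm q v)\<^sup>2" "(norm v)\<^sup>2"]
      real_sqrt_le_mono[of "(norm v)\<^sup>2" "_ * (lq_norm q v)\<^sup>2"]
    by (simp add: sqrt_scaled)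
qed

lemma mu_S_eps_q_nonneg:
  assumes q: "0 < q" and n: "1 < n" and ne: "\<forall>i<n. 0 < m i" and unit: "\<forall>i<n. \<forall>j<m i. norm (B i j) = 1"
  shows "0 \<le> mu_S n B m \<and> 0 \<le> eps_q q n B m"
proof -
  have col: "B i 0 \<in> subsp B m i" "B i 0 \<noteq> 0" if "i < n" for i
  proof -
    have "0 < m i" "norm (B i 0) = 1" using that ne unit by auto
    then show "B i 0 \<in> subsp B m i" "B i 0 \<noteq> 0" unfolding subsp_def by (auto intro: span_base)
  qed
  show ?thesis
    using mu_S_nonneg[OF _ _ _ col(1) col(1) col(2) col(2), of 0 n 1]
      eps_q_nonneg[OF q _ col(1) col(2), of 0 n] n by auto
qed

lemma norm_le_coherence_sum_norm:
  fixes u :: "nat \<Rightarrow> 'a::real_inner"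
  assumes fin: "finite I" and j: "j \<in> I" and sum0: "(\<Sum>i\<in>I. u i) = 0" and mu: "0 \<le> \<mu>"
    and coh: "\<And>i. i \<in> I \<Longrightarrow> i \<noteq> j \<Longrightarrow> \<bar>u j \<bullet> u i\<bar> \<le> \<mu> * (norm (u j) * norm (u i))"
  shows "(1 + \<mu>) * norm (u j) \<le> \<mu> * (\<Sum>i\<in>I. norm (u i))"
proof -
  let ?R = "I - {j}"
  have total: "(\<Sum>i\<in>I. norm (u i)) = norm (u j) + (\<Sum>i\<in>?R. norm (u i))"
    using fin j by (simp add: sum.remove)
  have uj: "u j = - (\<Sum>i\<in>?R. u i)"
    using sum0 fin j by (simp add: sum.remove eq_neg_iff_add_eq_0)
  have "norm (u j) * norm (u j) = u j \<bullet> u j"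
    by (simp flip: power2_norm_eq_inner add: power2_eq_square)
  also have "\<dots> = - (\<Sum>i\<in>?R. u j \<bullet> u i)"
    by (subst (2) uj) (simp add: inner_sum_right)
  also have "\<dots> \<le> (\<Sum>i\<in>?R. \<bar>u j \<bullet> u i\<bar>)"
    using sum_abs[of "\<lambda>i. u j \<bullet> u i" ?R] by linarith
  also have "\<dots> \<le> (\<Sum>i\<in>?R. \<mu> * (norm (u j) * norm (u i)))"
    using coh by (intro sum_mono) auto
  also have "\<dots> = norm (u j) * (\<mu> * (\<Sum>i\<in>?R. norm (u i)))"
    by (simp add: sum_distrib_left mult_ac)
  finally have "norm (u j) \<le> \<mu> * (\<Sum>i\<in>?R. norm (u i))"
    by (cases "u j = 0") (auto simp: mu sum_nonneg)
  then show ?thesis unfolding total by (simp add: algebra_simps)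
qed

lemma sum_norm_le_coherence_sum_norm:
  fixes u :: "nat \<Rightarrow> 'a::real_inner"
  assumes fin: "finite I" and Lam: "Lam \<subseteq> I" "card Lam \<le> k"
    and sum0: "(\<Sum>i\<in>I. u i) = 0" and mu: "0 \<le> \<mu>"
    and coh: "\<And>i j. i \<in> I \<Longrightarrow> j \<in> I \<Longrightarrow> i \<noteq> j \<Longrightarrow> \<bar>u i \<bullet> u j\<bar> \<le> \<mu> * (norm (u i) * norm (u j))"
  shows "(1 - (real k - 1) * \<mu>) * (\<Sum>i\<in>Lam. norm (u i)) \<le> real k * \<mu> * (\<Sum>i\<in>I - Lam. norm (u i))"
proof -
  define A B where "A = (\<Sum>i\<in>Lam. norm (u i))" and "B = (\<Sum>i\<in>I - Lam. norm (u i))"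
  have "(1 + \<mu>) * A = (\<Sum>j\<in>Lam. (1 + \<mu>) * norm (u j))"
    by (simp add: A_def sum_distrib_left)
  also have "\<dots> \<le> (\<Sum>j\<in>Lam. \<mu> * (\<Sum>i\<in>I. norm (u i)))"
    using Lam by (intro sum_mono norm_le_coherence_sum_norm[OF fin _ sum0 mu] coh) auto
  also have "\<dots> = real (card Lam) * \<mu> * (A + B)"
    using sum.subset_diff[OF Lam(1) fin, of "\<lambda>i. norm (u i)"] by (simp add: A_def B_def)
  also have "\<dots> \<le> real k * \<mu> * (A + B)"
    using Lam(2) mu by (intro mult_right_mono) (auto simp: A_def B_def sum_nonneg)
  finally show ?thesis
    unfolding A_def[symmetric] B_def[symmetric] by (simp add: algebra_simps)
qed

lemma coherence_null_space_property:
  fixes u :: "nat \<Rightarrow> 'a::real_inner" and N :: "'a \<Rightarrow> real"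
  assumes fin: "finite I" and Lam: "Lam \<subseteq> I" "card Lam \<le> k" "1 \<le> k"
    and sum0: "(\<Sum>i\<in>I. u i) = 0"
    and coh: "\<And>i j. i \<in> I \<Longrightarrow> j \<in> I \<Longrightarrow> i \<noteq> j \<Longrightarrow> \<bar>u i \<bullet> u j\<bar> \<le> \<mu> * (norm (u i) * norm (u j))"
    and equiv: "\<And>i. i \<in> I \<Longrightarrow> \<alpha> * N (u i) \<le> norm (u i) \<and> norm (u i) \<le> \<beta> * N (u i)"
    and N_nonneg: "\<And>i. i \<in> I \<Longrightarrow> 0 \<le> N (u i)"
    and params: "0 \<le> \<mu>" "0 < \<alpha>" "\<alpha> \<le> \<beta>" "(2 * real k - 1) * \<mu> * \<beta> < \<alpha>"
    and dominated: "(\<Sum>i\<in>I - Lam. N (u i)) \<le> (\<Sum>i\<in>Lam. N (u i))"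
  shows "\<forall>i\<in>I. u i = 0"
proof -
  define A2 Aq where "A2 = (\<Sum>i\<in>Lam. norm (u i))" and "Aq = (\<Sum>i\<in>Lam. N (u i))"
  define B2 Bq where "B2 = (\<Sum>i\<in>I - Lam. norm (u i))" and "Bq = (\<Sum>i\<in>I - Lam. N (u i))"
  have A2_le: "(1 - (real k - 1) * \<mu>) * A2 \<le> real k * \<mu> * B2"
    unfolding A2_def B2_def by (rule sum_norm_le_coherence_sum_norm[OF fin Lam(1,2) sum0 params(1) coh])
  have Aq_le: "\<alpha> * Aq \<le> A2" and B2_le: "B2 \<le> \<beta> * Bq"
    using equiv Lam(1) unfolding A2_def Aq_def B2_def Bq_def
    by (auto simp: sum_distrib_left intro!: sum_mono)
  have kmu: "0 \<le> (real k - 1) * \<mu>" using Lam(3) params(1) by simp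
  then have contraction: "0 < \<alpha> * (1 - (real k - 1) * \<mu>) - real k * \<mu> * \<beta>"
    using params mult_left_mono[OF params(3) kmu] by (simp add: algebra_simps)
  have "0 \<le> real k * \<mu> * \<beta>" using params by simp
  then have "0 < \<alpha> * (1 - (real k - 1) * \<mu>)" using contraction by linarith
  then have "0 < 1 - (real k - 1) * \<mu>" using params(2) by (simp add: zero_less_mult_iff)
  then have "\<alpha> * (1 - (real k - 1) * \<mu>) * Aq \<le> (1 - (real k - 1) * \<mu>) * A2"
    using mult_left_mono[OF Aq_le, of "1 - (real k - 1) * \<mu>"] by (simp add: mult_ac)
  also have "\<dots> \<le> real k * \<mu> * B2" by (rule A2_le)
  also have "\<dots> \<le> real k * \<mu> * (\<beta> * Aq)"
  proof -
    have "\<beta> * Bq \<le> \<beta> * Aq" using dominated params by (intro mult_left_mono) (auto simp: Aq_def Bq_def)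
    then have "B2 \<le> \<beta> * Aq" using B2_le by linarith
    then show ?thesis using params by (intro mult_left_mono) auto
  qed
  finally have "(\<alpha> * (1 - (real k - 1) * \<mu>) - real k * \<mu> * \<beta>) * Aq \<le> 0"
    by (simp add: algebra_simps)
  then have "Aq \<le> 0" using contraction by (simp add: mult_le_0_iff)
  moreover have "0 \<le> Bq" "0 \<le> Aq"
    using N_nonneg Lam(1) unfolding Aq_def Bq_def by (auto intro: sum_nonneg)
  ultimately have "Aq = 0" "Bq = 0" using dominated unfolding Aq_def Bq_def by linarith+
  moreover have "(\<Sum>i\<in>I. N (u i)) = Aq + Bq"
    using sum.subset_diff[OF Lam(1) fin, of "\<lambda>i. N (u i)"] unfolding Aq_def Bq_def by simp
  ultimately have "\<forall>i\<in>I. N (u i) = 0" using N_nonneg fin by (simp add: sum_nonneg_eq_0_iff)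
  then show ?thesis
    using equiv params by (metis mult_zero_right norm_le_zero_iff)
qed

lemma opt_lq_l1_off_support_le:
  assumes q: "1 \<le> q" and opt: "opt_lq_l1 q n B m y c" and Lam: "Lam \<subseteq> {..<n}"
    and s: "\<forall>i\<in>Lam. s i \<in> subsp B m i" and y: "y = (\<Sum>i\<in>Lam. s i)"
  shows "(\<Sum>i\<in>{..<n} - Lam. lq_norm q (blk B m c i)) \<le> (\<Sum>i\<in>Lam. lq_norm q (blk B m c i - s i))"
proof -
  have q0: "0 < q" using q by simp
  have "\<forall>i\<in>Lam. \<exists>cc. s i = blk B m cc i" using s by (auto simp: subsp_eq_range_blk)
  then obtain cs where cs: "\<forall>i\<in>Lam. s i = blk B m (cs i) i" by metis
  define c' where "c' i j = (if i \<in> Lam then cs i i j else 0)" for i j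
  have blk_c': "blk B m c' i = (if i \<in> Lam then s i else 0)" for i
    using cs by (auto simp: blk_def c'_def)
  have "y = dict_mult n B m c'"
    unfolding dict_mult_def blk_c' sum_if_mem_subset[OF finite_lessThan Lam] y ..
  with opt have "lq_l1_obj q n B m c \<le> lq_l1_obj q n B m c'"
    unfolding opt_lq_l1_def by blast
  also have "lq_l1_obj q n B m c' = (\<Sum>i<n. if i \<in> Lam then lq_norm q (s i) else 0)"
    unfolding lq_l1_obj_def blk_c' using q0 by (intro sum.cong) auto
  also have "\<dots> = (\<Sum>i\<in>Lam. lq_norm q (s i))"
    by (rule sum_if_mem_subset[OF finite_lessThan Lam])
  also have "\<dots> \<le> (\<Sum>i\<in>Lam. lq_norm q (blk B m c i) + lq_norm q (blk B m c i - s i))"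
  proof (intro sum_mono)
    fix i
    show "lq_norm q (s i) \<le> lq_norm q (blk B m c i) + lq_norm q (blk B m c i - s i)"
      using lq_norm_triangle[OF q, of "blk B m c i" "s i - blk B m c i"] by (simp add: lq_norm_minus_commute)
  qed
  also have "\<dots> = (\<Sum>i\<in>Lam. lq_norm q (blk B m c i)) + (\<Sum>i\<in>Lam. lq_norm q (blk B m c i - s i))"
    by (rule sum.distrib)
  finally show ?thesis
    using sum.subset_diff[OF Lam, of "\<lambda>i. lq_norm q (blk B m c i)"] unfolding lq_l1_obj_def by simp
qed

lemma coherence_condition_sqrt:
  fixes \<epsilon> x :: real
  assumes "0 \<le> \<epsilon>" "0 \<le> x" "x < (1 - \<epsilon>) / (1 + \<epsilon>)"
  shows "x * sqrt (1 + \<epsilon>) < sqrt (1 - \<epsilon>)"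
proof -
  have "0 < (1 - \<epsilon>) / (1 + \<epsilon>)" using assms(2,3) by linarith
  then have "\<epsilon> < 1" using assms(1) by (simp add: zero_less_divide_iff)
  define r where "r = sqrt (1 - \<epsilon>) / sqrt (1 + \<epsilon>)"
  have "0 \<le> r" "r \<le> 1" using \<open>\<epsilon> < 1\<close> assms(1) by (auto simp: r_def)
  have "x < r\<^sup>2"
    using assms \<open>\<epsilon> < 1\<close> by (simp add: r_def power_divide)
  also have "\<dots> \<le> r"
    using \<open>0 \<le> r\<close> \<open>r \<le> 1\<close> by (simp add: power2_eq_square mult_left_le)
  finally show ?thesis
    using assms(1) by (simp add: r_def pos_less_divide_eq)
qed

lemma dictionary_null_space_property:
  fixes B :: "nat \<Rightarrow> nat \<Rightarrow> real^'d" and u :: "nat \<Rightarrow> real^'d"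
  assumes q: "0 < q" and Lam: "Lam \<subseteq> {..<n}" "card Lam \<le> k" "1 \<le> k"
    and u: "\<And>i. i < n \<Longrightarrow> u i \<in> subsp B m i" and sum0: "(\<Sum>i<n. u i) = 0"
    and nonneg: "0 \<le> mu_S n B m" "0 \<le> eps_q q n B m"
    and coh: "(2 * real k - 1) * mu_S n B m < (1 - eps_q q n B m) / (1 + eps_q q n B m)"
    and dominated: "(\<Sum>i\<in>{..<n} - Lam. lq_norm q (u i)) \<le> (\<Sum>i\<in>Lam. lq_norm q (u i))"
  shows "\<forall>i<n. u i = 0"
proof -
  define \<mu> \<epsilon> where "\<mu> = mu_S n B m" and "\<epsilon> = eps_q q n B m"
  have "0 \<le> (2 * real k - 1) * \<mu>" using Lam(3) nonneg unfolding \<mu>_def by simp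
  then have cond: "(2 * real k - 1) * \<mu> * sqrt (1 + \<epsilon>) < sqrt (1 - \<epsilon>)"
    using coherence_condition_sqrt nonneg(2) coh unfolding \<mu>_def \<epsilon>_def by blast
  moreover have "0 \<le> (2 * real k - 1) * \<mu> * sqrt (1 + \<epsilon>)"
    using \<open>0 \<le> (2 * real k - 1) * \<mu>\<close> nonneg(2) unfolding \<epsilon>_def by simp
  ultimately have "0 < sqrt (1 - \<epsilon>)" by linarith
  have "\<forall>i\<in>{..<n}. u i = 0"
  proof (rule coherence_null_space_property[where N = "lq_norm q" and \<alpha> = "sqrt (1 - \<epsilon>)"])
    show "\<bar>u i \<bullet> u j\<bar> \<le> \<mu> * (norm (u i) * norm (u j))" if "i \<in> {..<n}" "j \<in> {..<n}" "i \<noteq> j" for i j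
      using that u unfolding \<mu>_def by (intro abs_inner_le_mu_S) auto
    show "sqrt (1 - \<epsilon>) * lq_norm q (u i) \<le> norm (u i) \<and> norm (u i) \<le> sqrt (1 + \<epsilon>) * lq_norm q (u i)"
      if "i \<in> {..<n}" for i
      using that u unfolding \<epsilon>_def by (intro lq_norm_equiv_eps_q q) auto
  qed (use Lam sum0 nonneg dominated cond \<open>0 < sqrt (1 - \<epsilon>)\<close> in \<open>auto simp: \<mu>_def \<epsilon>_def lq_norm_nonneg\<close>)
  then show ?thesis by simp
qed

theorem corollary3:
  fixes B :: "nat \<Rightarrow> nat \<Rightarrow> real^'d" and m :: "nat \<Rightarrow> nat" and n k :: nat and q :: real
  assumes q: "q \<ge> 1"
    and k: "0 < k" "k < n"
    and blocks_nonempty: "\<forall>i<n. 0 < m i"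
    and unit_cols: "\<forall>i<n. \<forall>j<m i. norm (B i j) = 1"
    and indep: "\<forall>i<n. \<forall>j<n. i \<noteq> j \<longrightarrow> subsp B m i \<inter> subsp B m j = {0}"
    and uniq: "unique_block_sparse n B m k"
    and coh: "(2 * real k - 1) * mu_S n B m < (1 - eps_q q n B m) / (1 + eps_q q n B m)"
  shows "\<forall>Lam y c. Lam \<subseteq> {..<n} \<and> card Lam = k \<and>
           y \<in> {\<Sum>i\<in>Lam. s i | s. \<forall>i\<in>Lam. s i \<in> subsp B m i} \<and>
           opt_lq_l1 q n B m y c
         \<longrightarrow> (\<forall>i<n. i \<notin> Lam \<longrightarrow> blk B m c i = 0)"
proof (intro allI impI, elim conjE)
  fix Lam y c i
  assume Lam: "Lam \<subseteq> {..<n}" and card: "card Lam = k"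
    and "y \<in> {\<Sum>i\<in>Lam. s i | s. \<forall>i\<in>Lam. s i \<in> subsp B m i}"
    and opt: "opt_lq_l1 q n B m y c" and i: "i < n" "i \<notin> Lam"
  then obtain s where s: "\<forall>i\<in>Lam. s i \<in> subsp B m i" and y: "y = (\<Sum>i\<in>Lam. s i)" by blast
  have nonneg: "0 \<le> mu_S n B m" "0 \<le> eps_q q n B m"
    using mu_S_eps_q_nonneg[of q n m B] q k blocks_nonempty unit_cols by auto
  define u where "u i = blk B m c i - (if i \<in> Lam then s i else 0)" for i
  have "\<forall>i<n. u i = 0"
  proof (rule dictionary_null_space_property[OF _ Lam _ _ _ _ nonneg coh])
    show "u i \<in> subsp B m i" for i
    proof -
      have "blk B m c i \<in> subsp B m i" by (auto simp: subsp_eq_range_blk)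
      then show ?thesis using s unfolding u_def subsp_def by (auto intro: span_diff)
    qed
    have "(\<Sum>i<n. if i \<in> Lam then s i else 0) = y"
      using sum_if_mem_subset[OF finite_lessThan Lam] y by simp
    then show "(\<Sum>i<n. u i) = 0"
      using opt unfolding u_def opt_lq_l1_def dict_mult_def by (simp add: sum_subtractf)
    show "(\<Sum>i\<in>{..<n} - Lam. lq_norm q (u i)) \<le> (\<Sum>i\<in>Lam. lq_norm q (u i))"
      using opt_lq_l1_off_support_le[OF q opt Lam s y] unfolding u_def by simp
  qed (use q k card in auto)
  then show "blk B m c i = 0" using i by (simp add: u_def)
qed

end
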